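(* Let $\mu_0$ be the ideal expectation of a bounded observable; single shots at noise $\epsilon\ge0$ have mean $\mu(\epsilon)$ and variance $v(\epsilon)$. Fix a Richardson rule of order $k\ge1$: scale factors $1=\lambda_0<\cdots<\lambda_k$, coefficients $c_j$ with $\sum_jc_j=1$, $\sum_jc_j\lambda_j^m=0$ ($m=1,\ldots,k$), allocation fractions $\pi_j>0$, $\sum_j\pi_j=1$. With total budget $B$, the unmitigated estimator uses $B$ shots at noise $\epsilon$; the ZNE estimator is $\sum_jc_j\widehat\mu(\lambda_j\epsilon)$ with $\widehat\mu(\lambda_j\epsilon)$ the mean of $\pi_jB$ shots at noise $\lambda_j\epsilon$, samples at distinct scales independent. Assume: (A1$(k)$) uniformly over $j$, $\mu(\lambda_j\epsilon)=\mu_0+\sum_{m=1}^ka_m\lambda_j^m\epsilon^m+O(\epsilon^{k+1})$ with $a_1=\alpha\ne0$; (A4) uniformly over the scaled noise levels, $v(\epsilon)=\nu\epsilon^q+O(\epsilon^{q+\delta_v})$ with $\nu>0$, $\delta_v>0$; (A5) the MSE difference $\Delta_{\mathrm{MSE}}(\epsilon,B)=\mathrm{MSE}_{\mathrm{noisy}}-\mathrm{MSE}_{\mathrm{ZNE}}$ satisfies \[ \Delta_{\mathrm{MSE}}(\epsilon,B)=\alpha^2\epsilon^2-\frac{K_{q,k}\epsilon^q}{B}+R(\epsilon,B),\qquad R=O(\epsilon^{2+\delta_b})+O(\epsilon^{q+\delta_v}/B), \] for some $\delta_b>0$, with differentiable power-law remainder whose rescaled version $B^{2/(2-q)}R(xB^{-1/(2-q)},B)$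 and its $x$-derivative tend to $0$ uniformly on compact subsets of $(0,\infty)$ when $q<2$, where $K_{q,k}=\nu[\sum_j c_j^2\lambda_j^q/\pi_j-1]$. Then $K_{q,k}>0$, and: if $0\le q<2$, the lower local perturbative crossing of $\Delta_{\mathrm{MSE}}(\cdot,B)$ satisfies \[ \epsilon^*(B)\sim C_{q,k}B^{-1/(2-q)},\qquad C_{q,k}=\left(\frac{K_{q,k}}{\alpha^2}\right)^{1/(2-q)}; \] if $q=2$, the local sign of $\Delta_{\mathrm{MSE}}$ for small $\epsilon>0$ is governed by the budget threshold $B^*=K_{2,k}/\alpha^2$ (ZNE helps for all small $\epsilon$ if $B>B^*$, harms if $B<B^*$); if $q>2$, the leading variance penalty is too small near zero to create a shrinking lower boundary (for each large fixed $B$, $\Delta_{\mathrm{MSE}}>0$ for all sufficiently small $\epsilon>0$, absent sign changes from higher-order terms).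
   Context: $\mathrm{MSE}(\widehat\mu)=\mathbb E[(\widehat\mu-\mu_0)^2]$. The lower local perturbative crossing is the first positive zero of $\Delta_{\mathrm{MSE}}(\cdot,B)$, in a window of the form $\{xB^{-1/(2-q)}:x\in[m,M]\}$ with $0<m<C_{q,k}<M$, across which $\Delta_{\mathrm{MSE}}$ changes from negative (ZNE harms) to positive (ZNE helps); $\epsilon^*(B)\sim g(B)$ means the ratio tends to $1$ as $B\to\infty$. *)

theory Defs
  imports "HOL-Analysis.Analysis"
begin

text \<open>Scales lam j, coefficients cf j, allocation fractions pr j,
  for j = 0..k.  mu = single-shot mean, v = single-shot variance as functions of noise,
  mu0 = ideal expectation, B = total shot budget (real).\<close>

definition mse_noisy :: "(real \<Rightarrow> real) \<Rightarrow> real \<Rightarrow> (real \<Rightarrow> real) \<Rightarrow> real \<Rightarrow> real \<Rightarrow> real" where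
  "mse_noisy mu mu0 v eps B = (mu eps - mu0)^2 + v eps / B"

text \<open>MSE of the ZNE estimator sum_j cf_j * muhat(lam_j eps), where muhat(lam_j eps) is the
  mean of pr_j * B independent shots at noise lam_j eps, scales mutually independent.\<close>
definition mse_zne :: "(real \<Rightarrow> real) \<Rightarrow> real \<Rightarrow> (real \<Rightarrow> real) \<Rightarrow> nat \<Rightarrow> (nat \<Rightarrow> real)
    \<Rightarrow> (nat \<Rightarrow> real) \<Rightarrow> (nat \<Rightarrow> real) \<Rightarrow> real \<Rightarrow> real \<Rightarrow> real" where
  "mse_zne mu mu0 v k cf lam pr eps B =
     ((\<Sum>j\<le>k. cf j * mu (lam j * eps)) - mu0)^2
     + (\<Sum>j\<le>k. (cf j)^2 * v (lam j * eps) / (pr j * B))"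

definition delta_mse :: "(real \<Rightarrow> real) \<Rightarrow> real \<Rightarrow> (real \<Rightarrow> real) \<Rightarrow> nat \<Rightarrow> (nat \<Rightarrow> real)
    \<Rightarrow> (nat \<Rightarrow> real) \<Rightarrow> (nat \<Rightarrow> real) \<Rightarrow> real \<Rightarrow> real \<Rightarrow> real" where
  "delta_mse mu mu0 v k cf lam pr eps B =
     mse_noisy mu mu0 v eps B - mse_zne mu mu0 v k cf lam pr eps B"

definition K_qk :: "real \<Rightarrow> real \<Rightarrow> nat \<Rightarrow> (nat \<Rightarrow> real) \<Rightarrow> (nat \<Rightarrow> real) \<Rightarrow> (nat \<Rightarrow> real) \<Rightarrow> real" where
  "K_qk nu q k cf lam pr = nu * ((\<Sum>j\<le>k. (cf j)^2 * lam j powr q / pr j) - 1)"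

definition zne_R :: "(real \<Rightarrow> real) \<Rightarrow> real \<Rightarrow> (real \<Rightarrow> real) \<Rightarrow> nat \<Rightarrow> (nat \<Rightarrow> real)
    \<Rightarrow> (nat \<Rightarrow> real) \<Rightarrow> (nat \<Rightarrow> real) \<Rightarrow> real \<Rightarrow> real \<Rightarrow> real \<Rightarrow> real \<Rightarrow> real \<Rightarrow> real" where
  "zne_R mu mu0 v k cf lam pr alpha nu q eps B =
     delta_mse mu mu0 v k cf lam pr eps B
     - (alpha^2 * eps^2 - K_qk nu q k cf lam pr * eps powr q / B)"

definition lower_crossing :: "(real \<Rightarrow> real \<Rightarrow> real) \<Rightarrow> real \<Rightarrow> real \<Rightarrow> real \<Rightarrow> real \<Rightarrow> real" where
  "lower_crossing D q m M B =
     Inf {eps. m * B powr (-1/(2-q)) \<le> eps \<and> eps \<le> M * B powr (-1/(2-q)) \<and> D eps B = 0}"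

end

(* Positivity of K is a chi-square inequality: sum_j c_j^2/pi_j - 1 = sum_j (c_j - pi_j)^2/pi_j,
   and c differs from pi because sum_j c_j lam_j = 0 while sum_j pi_j lam_j > 0; the factors
   lam_j^q >= 1 only increase the sum.

   For q < 2 the substitution eps = x B^(-1/(2-q)) turns B^(2/(2-q)) Delta(eps, B) into the
   profile alpha^2 x^2 - K x^q plus a remainder that tends to 0 together with its x-derivative,
   uniformly on compacts.  The profile has a simple zero at C = (K/alpha^2)^(1/(2-q)), and a
   C^1-small perturbation of a function with a simple zero still changes sign exactly once in
   the window, close to C.  Undoing the substitution gives the crossing eps*(B) ~ C B^(-1/(2-q)).

   For q >= 2 and fixed B the variance penalty K eps^q / B is of order eps^2 (q = 2) or o(eps^2)
   (q > 2), so near eps = 0 the sign of Delta is that of its eps^2 coefficient, alpha^2 - K/B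
   or alpha^2. *)

theory Submission
  imports Defs "HOL-Library.Landau_Symbols"
begin

lemma sum_square_div_gt_one:
  fixes c p :: "'a \<Rightarrow> real"
  assumes "finite I" and p_pos: "\<forall>j\<in>I. p j > 0"
    and c_sum: "(\<Sum>j\<in>I. c j) = 1" and p_sum: "(\<Sum>j\<in>I. p j) = 1"
    and "j \<in> I" "c j \<noteq> p j"
  shows "(\<Sum>j\<in>I. (c j)^2 / p j) > 1"
proof -
  have "(\<Sum>j\<in>I. (c j - p j)^2 / p j) = (\<Sum>j\<in>I. (c j)^2 / p j - 2 * c j + p j)"
    using p_pos by (intro sum.cong) (auto simp: field_simps power2_eq_square)
  also have "\<dots> = (\<Sum>j\<in>I. (c j)^2 / p j) - 1"
    using c_sum p_sum by (simp add: sum.distrib sum_subtractf flip: sum_distrib_left)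
  finally have chi2: "(\<Sum>j\<in>I. (c j - p j)^2 / p j) = (\<Sum>j\<in>I. (c j)^2 / p j) - 1" .
  have "(\<Sum>j\<in>I. (c j - p j)^2 / p j) > 0"
    using assms by (intro sum_pos2[of _ j]) (auto simp: less_imp_le)
  with chi2 show ?thesis by simp
qed

lemma K_qk_pos:
  fixes lam cf pr :: "nat \<Rightarrow> real"
  assumes "nu > 0" "q \<ge> 0" and lam0: "lam 0 = 1"
    and lam_mono: "\<forall>i j. i < j \<and> j \<le> k \<longrightarrow> lam i < lam j"
    and cf_sum: "(\<Sum>j\<le>k. cf j) = 1" and cf_moment1: "(\<Sum>j\<le>k. cf j * lam j) = 0"
    and pr_pos: "\<forall>j\<le>k. pr j > 0" and pr_sum: "(\<Sum>j\<le>k. pr j) = 1"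
  shows "K_qk nu q k cf lam pr > 0"
proof -
  have lam_ge_1: "lam j \<ge> 1" if "j \<le> k" for j
    using lam_mono lam0 that by (cases "j = 0") force+
  have "pr j * lam j > 0" if "j \<le> k" for j
    using pr_pos lam_ge_1[OF that] that by simp
  then have "(\<Sum>j\<le>k. pr j * lam j) > 0"
    by (intro sum_pos2[of _ 0]) (auto simp: less_imp_le)
  have "\<not> (\<forall>j\<le>k. cf j = pr j)"
  proof
    assume "\<forall>j\<le>k. cf j = pr j"
    then have "(\<Sum>j\<le>k. cf j * lam j) = (\<Sum>j\<le>k. pr j * lam j)"
      by simp
    with \<open>(\<Sum>j\<le>k. pr j * lam j) > 0\<close> cf_moment1 show False
      by simp
  qed
  then obtain j where j: "j \<le> k" "cf j \<noteq> pr j"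
    by blast
  have "1 < (\<Sum>j\<le>k. (cf j)^2 / pr j)"
    using j pr_pos cf_sum pr_sum by (intro sum_square_div_gt_one) auto
  also have "\<dots> \<le> (\<Sum>j\<le>k. (cf j)^2 * lam j powr q / pr j)"
  proof (rule sum_mono)
    fix i assume "i \<in> {..k}"
    then have "lam i powr q \<ge> 1" "pr i > 0" using lam_ge_1 \<open>q \<ge> 0\<close> ge_one_powr_ge_zero pr_pos by auto
    then show "(cf i)^2 / pr i \<le> (cf i)^2 * lam i powr q / pr i"
      by (simp add: divide_right_mono mult_le_cancel_left1)
  qed
  finally show ?thesis using \<open>nu > 0\<close> by (simp add: K_qk_def)
qed

lemma powr_smallo_square:
  assumes "d > 0"
  shows "(\<lambda>x::real. x powr (2 + d)) \<in> o[at_right 0](\<lambda>x. x^2)"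
proof (rule smalloI_tendsto)
  have pos: "\<forall>\<^sub>F x in at_right 0. (x::real) > 0"
    by (simp add: eventually_at_right_less)
  then have "\<forall>\<^sub>F x in at_right 0. x powr d = x powr (2 + d) / x^2"
    by eventually_elim (simp add: powr_add powr_numeral)
  moreover have "((\<lambda>x::real. x powr d) \<longlongrightarrow> 0) (at_right 0)"
    using assms eventually_at_right_less[of "0::real"]
    by (intro tendsto_zero_powrI tendsto_ident_at) (auto elim!: eventually_mono)
  ultimately show "((\<lambda>x. x powr (2 + d) / x^2) \<longlongrightarrow> 0) (at_right 0)"
    by (blast intro: Lim_transform_eventually)
  show "\<forall>\<^sub>F x in at_right 0. (x::real)^2 \<noteq> 0"
    using pos by eventually_elim simp
qed

lemma smallo_square_if_powr_bound:
  fixes R :: "real \<Rightarrow> real"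
  assumes "db > 0" "dv > 0" "r > 0"
    and bound: "\<forall>x. 0 < x \<and> x \<le> r \<longrightarrow> \<bar>R x\<bar> \<le> C * (x powr (2 + db) + x powr (2 + dv) / B)"
  shows "R \<in> o[at_right 0](\<lambda>x. x^2)"
proof (rule landau_o.big_small_trans)
  have "\<forall>\<^sub>F x in at_right 0. x \<in> {0<..<r}"
    using \<open>r > 0\<close> by (rule eventually_at_right_real)
  then show "R \<in> O[at_right 0](\<lambda>x. C * (x powr (2 + db) + x powr (2 + dv) / B))"
    using bound by (intro landau_o.bigI[of 1]) (auto elim!: eventually_mono)
  have "(\<lambda>x. x powr (2 + db) + x powr (2 + dv) / B) \<in> o[at_right 0](\<lambda>x. x^2)"
    using powr_smallo_square[OF \<open>dv > 0\<close>]
    by (intro sum_in_smallo powr_smallo_square \<open>db > 0\<close>) (cases "B = 0", auto)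
  then show "(\<lambda>x. C * (x powr (2 + db) + x powr (2 + dv) / B)) \<in> o[at_right 0](\<lambda>x. x^2)"
    by (cases "C = 0") auto
qed

lemma eventually_sgn_eq_if_square_dominant:
  fixes f :: "real \<Rightarrow> real"
  assumes "c \<noteq> 0" and "(\<lambda>x. f x - c * x^2) \<in> o[at_right 0](\<lambda>x. x^2)"
  shows "\<forall>\<^sub>F x in at_right 0. sgn (f x) = sgn c"
proof -
  have "\<forall>\<^sub>F x in at_right 0. \<bar>f x - c * x^2\<bar> \<le> \<bar>c\<bar> / 2 * x^2"
    using landau_o.smallD[OF assms(2), of "\<bar>c\<bar> / 2"] \<open>c \<noteq> 0\<close> by simp
  moreover have "\<forall>\<^sub>F x in at_right 0. (x::real) > 0"
    by (simp add: eventually_at_right_less)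
  ultimately show ?thesis
  proof eventually_elim
    case (elim x)
    have "\<bar>c\<bar> / 2 * x^2 < \<bar>c\<bar> * x^2"
      using \<open>c \<noteq> 0\<close> \<open>x > 0\<close> by simp
    with elim have "\<bar>f x - c * x^2\<bar> < \<bar>c * x^2\<bar>"
      by (simp add: abs_mult)
    then show ?case
      using \<open>c \<noteq> 0\<close> \<open>x > 0\<close> by (auto simp: sgn_if abs_if mult_less_0_iff split: if_splits)
  qed
qed

lemma sgn_threshold_at_quadratic_variance:
  fixes D R :: "real \<Rightarrow> real"
  assumes "A > 0" "B > 0" "db > 0" "dv > 0" "r > 0"
    and D_eq: "\<And>x. D x = A * x^2 - K * x powr 2 / B + R x"
    and bound: "\<forall>x. 0 < x \<and> x \<le> r \<longrightarrow> \<bar>R x\<bar> \<le> C * (x powr (2 + db) + x powr (2 + dv) / B)"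
    and "B \<noteq> K / A"
  shows "\<forall>\<^sub>F x in at_right 0. sgn (D x) = sgn (B - K / A)"
proof -
  have fac: "A - K / B = A / B * (B - K / A)"
    using \<open>A > 0\<close> \<open>B > 0\<close> by (simp add: field_simps)
  then have "sgn (A - K / B) = sgn (B - K / A)"
    using \<open>A > 0\<close> \<open>B > 0\<close> by (simp add: sgn_mult)
  moreover have "\<forall>\<^sub>F x in at_right 0. sgn (D x) = sgn (A - K / B)"
  proof (rule eventually_sgn_eq_if_square_dominant)
    show "A - K / B \<noteq> 0"
      using fac \<open>A > 0\<close> \<open>B > 0\<close> \<open>B \<noteq> K / A\<close> by simp
    have "\<forall>\<^sub>F x in at_right 0. (x::real) > 0"
      by (simp add: eventually_at_right_less)
    then have "\<forall>\<^sub>F x in at_right 0. R x = D x - (A - K / B) * x^2"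
      by eventually_elim (simp add: D_eq powr_numeral left_diff_distrib)
    from landau_o.small.in_cong[OF this]
    show "(\<lambda>x. D x - (A - K / B) * x^2) \<in> o[at_right 0](\<lambda>x. x^2)"
      using smallo_square_if_powr_bound[OF assms(3-5) bound] by simp
  qed
  ultimately show ?thesis by simp
qed

lemma eventually_pos_at_superquadratic_variance:
  fixes D R :: "real \<Rightarrow> real"
  assumes "A > 0" "q > 2" "db > 0" "dv > 0" "r > 0"
    and D_eq: "\<And>x. D x = A * x^2 - K * x powr q / B + R x"
    and bound: "\<forall>x. 0 < x \<and> x \<le> r \<longrightarrow> \<bar>R x\<bar> \<le> C * (x powr (2 + db) + x powr (q + dv) / B)"
  shows "\<forall>\<^sub>F x in at_right 0. D x > 0"
proof -
  have "\<forall>x. 0 < x \<and> x \<le> r \<longrightarrow>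
      \<bar>R x\<bar> \<le> C * (x powr (2 + db) + x powr (2 + (q - 2 + dv)) / B)"
    using bound by simp
  then have "R \<in> o[at_right 0](\<lambda>x. x^2)"
    using assms(2-5) by (intro smallo_square_if_powr_bound[of db "q - 2 + dv" r]) simp_all
  moreover have "(\<lambda>x. x powr q) \<in> o[at_right 0](\<lambda>x. x^2)"
    using powr_smallo_square[of "q - 2"] \<open>q > 2\<close> by simp
  then have "(\<lambda>x. K / B * x powr q) \<in> o[at_right 0](\<lambda>x. x^2)"
    by (cases "K = 0"; cases "B = 0") simp_all
  ultimately have "(\<lambda>x. R x - K / B * x powr q) \<in> o[at_right 0](\<lambda>x. x^2)"
    by (rule sum_in_smallo(2))
  moreover have "(\<lambda>x. D x - A * x^2) = (\<lambda>x. R x - K / B * x powr q)"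
    by (simp add: D_eq fun_eq_iff)
  ultimately have "\<forall>\<^sub>F x in at_right 0. sgn (D x) = sgn A"
    using \<open>A > 0\<close> by (intro eventually_sgn_eq_if_square_dominant) simp_all
  then show ?thesis
    using \<open>A > 0\<close> by (simp add: sgn_1_pos)
qed

lemma sgn_crossing_of_pos_deriv_between:
  fixes H H' :: "real \<Rightarrow> real"
  assumes "m \<le> a" "a < b" "b \<le> M"
    and H_deriv: "\<And>y. y \<in> {a..b} \<Longrightarrow> (H has_real_derivative H' y) (at y)"
    and H'_pos: "\<And>y. y \<in> {a..b} \<Longrightarrow> H' y > 0"
    and neg: "\<forall>y\<in>{m..a}. H y < 0" and pos: "\<forall>y\<in>{b..M}. H y > 0"
  obtains x where "a < x" "x < b" "\<forall>y\<in>{m..M}. sgn (H y) = sgn (y - x)"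
proof -
  have incr: "H u < H w" if "a \<le> u" "u < w" "w \<le> b" for u w
  proof (rule DERIV_pos_imp_increasing[OF \<open>u < w\<close>])
    fix y assume "u \<le> y" "y \<le> w"
    with that have "y \<in> {a..b}"
      by auto
    with H_deriv H'_pos show "\<exists>D. (H has_real_derivative D) (at y) \<and> D > 0"
      by blast
  qed
  have "continuous_on {a..b} H"
    using H_deriv by (intro DERIV_atLeastAtMost_imp_continuous_on) auto
  moreover have "H a < 0" "H b > 0"
    using assms by auto
  ultimately obtain x where x: "a \<le> x" "x \<le> b" "H x = 0"
    using IVT'[of H a 0 b] \<open>a < b\<close> by auto
  with \<open>H a < 0\<close> \<open>H b > 0\<close> have "a < x" "x < b"
    by (auto simp: order.order_iff_strict)
  moreover have "sgn (H y) = sgn (y - x)" if "y \<in> {m..M}" for y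
  proof -
    consider "y \<le> a" | "b \<le> y" | "y \<in> {a..b}"
      by fastforce
    then show ?thesis
    proof cases
      case 3
      with x incr[of y x] incr[of x y] show ?thesis
        by (cases y x rule: linorder_cases) (auto simp: sgn_if)
    qed (use that neg pos \<open>a < x\<close> \<open>x < b\<close> in auto)
  qed
  ultimately show ?thesis
    using that by blast
qed

lemma compact_abs_bounded_below:
  fixes f :: "real \<Rightarrow> real"
  assumes "compact T" "continuous_on T f" "\<forall>y\<in>T. f y \<noteq> 0"
  obtains d where "d > 0" "\<forall>y\<in>T. d \<le> \<bar>f y\<bar>"
proof (cases "T = {}")
  case False
  then obtain z where "z \<in> T" "\<forall>y\<in>T. \<bar>f z\<bar> \<le> \<bar>f y\<bar>"
    using continuous_attains_inf[of T "\<lambda>y. \<bar>f y\<bar>"] assms by (auto intro: continuous_intros)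
  with assms(3) show ?thesis
    by (intro that[of "\<bar>f z\<bar>"]) auto
qed (use that[of 1] in simp)

lemma simple_zero_margins:
  fixes f f' :: "real \<Rightarrow> real"
  assumes "m < C" "C < M" "\<eta> > 0"
    and f_deriv: "\<And>y. y \<in> {m..M} \<Longrightarrow> (f has_real_derivative f' y) (at y)"
    and "isCont f' C" "f' C > 0"
    and f_neg: "\<And>y. y \<in> {m..<C} \<Longrightarrow> f y < 0" and f_pos: "\<And>y. y \<in> {C<..M} \<Longrightarrow> f y > 0"
  obtains r d where "0 < r" "r < \<eta>" "m < C - r" "C + r < M" "d > 0"
    and "\<And>y. y \<in> {C - r..C + r} \<Longrightarrow> f' y > f' C / 2"
    and "\<And>y. y \<in> {m..C - r} \<Longrightarrow> f y \<le> -d"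
    and "\<And>y. y \<in> {C + r..M} \<Longrightarrow> f y \<ge> d"
proof -
  have "\<forall>\<^sub>F y in at C. f' y > f' C / 2"
    using order_tendstoD(1)[of f' "f' C" "at C" "f' C / 2"] \<open>isCont f' C\<close> \<open>f' C > 0\<close>
    by (simp add: isCont_def)
  then obtain \<delta> where "\<delta> > 0"
    and \<delta>: "\<And>y. y \<noteq> C \<Longrightarrow> dist y C < \<delta> \<Longrightarrow> f' y > f' C / 2"
    by (auto simp: eventually_at)
  define r where "r = min (min \<eta> \<delta>) (min (C - m) (M - C)) / 2"
  have "2 * r \<le> \<eta>" "2 * r \<le> \<delta>" "2 * r \<le> C - m" "2 * r \<le> M - C"
    by (auto simp: r_def min_le_iff_disj)
  moreover have "0 < r"
    using assms \<open>\<delta> > 0\<close> by (simp add: r_def)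
  ultimately have r: "0 < r" "r < \<eta>" "r < \<delta>" "m < C - r" "C + r < M"
    by linarith+
  have f'_big: "f' y > f' C / 2" if "y \<in> {C - r..C + r}" for y
  proof (cases "y = C")
    case False
    with that r show ?thesis
      by (intro \<delta>) (auto simp: dist_real_def)
  qed (use \<open>f' C > 0\<close> in simp)
  have f_neg': "f y < 0" if "y \<in> {m..C - r}" for y
    using that r by (intro f_neg) auto
  have f_pos': "f y > 0" if "y \<in> {C + r..M}" for y
    using that r by (intro f_pos) auto
  have "continuous_on {m..M} f"
    using f_deriv by (intro DERIV_atLeastAtMost_imp_continuous_on) auto
  then have "continuous_on {m..C - r} f" "continuous_on {C + r..M} f"
    using r by (auto elim!: continuous_on_subset)
  moreover have "\<forall>y\<in>{m..C - r}. f y \<noteq> 0" "\<forall>y\<in>{C + r..M}. f y \<noteq> 0"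
    using f_neg' f_pos' by fastforce+
  ultimately obtain d1 d2 where d1: "d1 > 0" "\<forall>y\<in>{m..C - r}. d1 \<le> \<bar>f y\<bar>"
    and d2: "d2 > 0" "\<forall>y\<in>{C + r..M}. d2 \<le> \<bar>f y\<bar>"
    using compact_abs_bounded_below[OF compact_Icc] by metis
  show ?thesis
  proof (rule that[OF r(1,2,4,5), of "min d1 d2"])
    fix y
    show "y \<in> {m..C - r} \<Longrightarrow> f y \<le> - min d1 d2"
      using d1 f_neg' by fastforce
    show "y \<in> {C + r..M} \<Longrightarrow> f y \<ge> min d1 d2"
      using d2 f_pos' by fastforce
  qed (use f'_big d1 d2 in auto)
qed

lemma eventually_sgn_crossing_near_simple_zero:
  fixes f f' :: "real \<Rightarrow> real" and S S' :: "'b \<Rightarrow> real \<Rightarrow> real"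
  assumes "m < C" "C < M" "\<eta> > 0"
    and f_deriv: "\<And>y. y \<in> {m..M} \<Longrightarrow> (f has_real_derivative f' y) (at y)"
    and "isCont f' C" "f' C > 0"
    and f_neg: "\<And>y. y \<in> {m..<C} \<Longrightarrow> f y < 0" and f_pos: "\<And>y. y \<in> {C<..M} \<Longrightarrow> f y > 0"
    and S_deriv: "\<forall>\<^sub>F t in F. \<forall>y\<in>{m..M}. (S t has_real_derivative S' t y) (at y)"
    and S_lim: "uniform_limit {m..M} S (\<lambda>_. 0) F" and S'_lim: "uniform_limit {m..M} S' (\<lambda>_. 0) F"
  shows "\<forall>\<^sub>F t in F. \<exists>x. \<bar>x - C\<bar> < \<eta> \<and> (\<forall>y\<in>{m..M}. sgn (f y + S t y) = sgn (y - x))"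
proof -
  obtain r d where r: "0 < r" "r < \<eta>" "m < C - r" "C + r < M" and "d > 0"
    and f'_big: "\<And>y. y \<in> {C - r..C + r} \<Longrightarrow> f' y > f' C / 2"
    and f_le: "\<And>y. y \<in> {m..C - r} \<Longrightarrow> f y \<le> -d"
    and f_ge: "\<And>y. y \<in> {C + r..M} \<Longrightarrow> f y \<ge> d"
    using simple_zero_margins[OF assms(1-8)] by blast
  have in_window: "y \<in> {m..M}" if "y \<in> {m..C - r} \<or> y \<in> {C - r..C + r} \<or> y \<in> {C + r..M}" for y
    using that r by auto
  have "\<forall>\<^sub>F t in F. \<forall>y\<in>{m..M}. \<bar>S t y\<bar> < d"
    using uniform_limitD[OF S_lim \<open>d > 0\<close>] by (simp add: dist_real_def)
  moreover have "\<forall>\<^sub>F t in F. \<forall>y\<in>{m..M}. \<bar>S' t y\<bar> < f' C / 2"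
    using uniform_limitD[OF S'_lim, of "f' C / 2"] \<open>f' C > 0\<close> by (simp add: dist_real_def)
  ultimately show ?thesis
    using S_deriv
  proof eventually_elim
    case (elim t)
    obtain x where "C - r < x" "x < C + r" "\<forall>y\<in>{m..M}. sgn (f y + S t y) = sgn (y - x)"
    proof (rule sgn_crossing_of_pos_deriv_between[of m "C - r" "C + r" M])
      fix y
      assume y: "y \<in> {C - r..C + r}"
      with elim(3) f_deriv in_window show "((\<lambda>y. f y + S t y) has_real_derivative f' y + S' t y) (at y)"
        by (blast intro: DERIV_add)
      from y in_window elim(2) have "\<bar>S' t y\<bar> < f' C / 2"
        by blast
      with f'_big[OF y] show "f' y + S' t y > 0"
        by linarith
    next
      show "\<forall>y\<in>{m..C - r}. f y + S t y < 0"
      proof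
        fix y
        assume y: "y \<in> {m..C - r}"
        with in_window elim(1) have "\<bar>S t y\<bar> < d"
          by blast
        with f_le[OF y] show "f y + S t y < 0"
          by linarith
      qed
      show "\<forall>y\<in>{C + r..M}. f y + S t y > 0"
      proof
        fix y
        assume y: "y \<in> {C + r..M}"
        with in_window elim(1) have "\<bar>S t y\<bar> < d"
          by blast
        with f_ge[OF y] show "f y + S t y > 0"
          by linarith
      qed
    qed (use r in auto)
    with r show ?case
      by (intro exI[of _ x]) auto
  qed
qed

lemma sgn_power_profile:
  fixes A K q y :: real
  assumes "q < 2" "A > 0" "K > 0" "y > 0"
  shows "sgn (A * y^2 - K * y powr q) = sgn (y - (K / A) powr (1 / (2 - q)))"
proof -
  define C where "C = (K / A) powr (1 / (2 - q))"
  have "C > 0" "C powr (2 - q) = K / A"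
    using assms by (simp_all add: C_def powr_powr)
  have "A * y^2 - K * y powr q = A * y powr q * (y powr (2 - q) - C powr (2 - q))"
    using assms \<open>C powr (2 - q) = K / A\<close>
    by (simp add: algebra_simps powr_diff powr_numeral)
  moreover have "sgn (y powr (2 - q) - C powr (2 - q)) = sgn (y - C)"
    using assms \<open>C > 0\<close> powr_less_mono2[of "2 - q" y C] powr_less_mono2[of "2 - q" C y]
    by (cases y C rule: linorder_cases) (auto simp: sgn_if)
  ultimately show ?thesis
    using assms by (simp add: sgn_mult C_def)
qed

lemma power_profile_deriv_pos_at_root:
  fixes A K q :: real
  assumes "q < 2" "A > 0" "K > 0"
  defines "C \<equiv> (K / A) powr (1 / (2 - q))"
  shows "A * (2 * C) - K * (q * C powr (q - 1)) > 0"
proof -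
  have "C > 0" "C powr (2 - q) = K / A"
    using assms by (simp_all add: C_def powr_powr)
  have "(A * (2 * C) - K * (q * C powr (q - 1))) * C = C powr q * (2 * A * C powr (2 - q) - K * q)"
    using \<open>C > 0\<close> by (simp add: algebra_simps powr_diff powr_numeral power2_eq_square)
  also have "\<dots> = C powr q * K * (2 - q)"
    using \<open>C powr (2 - q) = K / A\<close> \<open>A > 0\<close> by (simp add: algebra_simps)
  also have "\<dots> > 0"
    using \<open>C > 0\<close> \<open>K > 0\<close> \<open>q < 2\<close> by simp
  finally show ?thesis
    using \<open>C > 0\<close> by (simp add: zero_less_mult_iff)
qed

lemma power_law_rescaling:
  fixes A K q B y :: real
  assumes "q < 2" "B > 0" "y > 0"
  shows "B powr (2 / (2 - q)) * (A * (y * B powr (-1 / (2 - q)))^2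
           - K * (y * B powr (-1 / (2 - q))) powr q / B) = A * y^2 - K * y powr q"
proof -
  define s where "s = B powr (-1 / (2 - q))"
  define P where "P = B powr (2 / (2 - q))"
  have "P * s^2 = B powr (2 / (2 - q) + (-1 / (2 - q) + -1 / (2 - q)))"
    by (simp only: P_def s_def power2_eq_square powr_add)
  also have "\<dots> = 1"
    using assms by (simp add: field_simps)
  finally have Ps2: "P * s^2 = 1" .
  have "2 / (2 - q) + -1 / (2 - q) * q = 1"
    using assms by (simp add: diff_divide_distrib[symmetric])
  moreover have "P * s powr q = B powr (2 / (2 - q) + -1 / (2 - q) * q)"
    by (simp only: P_def s_def powr_add powr_powr)
  ultimately have "P * s powr q = B powr 1"
    by simp
  also have "\<dots> = B"
    using assms by simp
  finally have Psq: "P * s powr q = B" .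
  have "P * (A * (y * s)^2 - K * (y * s) powr q / B)
      = A * y^2 * (P * s^2) - K * y powr q * (P * s powr q) / B"
    using assms by (simp add: s_def powr_mult power_mult_distrib algebra_simps)
  also have "\<dots> = A * y^2 - K * y powr q"
    using Ps2 Psq \<open>B > 0\<close> by simp
  finally show ?thesis
    by (simp only: P_def s_def)
qed

lemma lower_crossing_of_sgn:
  fixes D :: "real \<Rightarrow> real \<Rightarrow> real" and q B m M x :: real
  assumes "B > 0" "m < x" "x < M"
  defines "s \<equiv> B powr (-1 / (2 - q))"
  assumes sgn_D: "\<forall>eps\<in>{m * s..M * s}. sgn (D eps B) = sgn (eps - x * s)"
  shows "lower_crossing D q m M B = x * s"
    and "D (x * s) B = 0"
    and "\<forall>\<^sub>F eps in at_left (x * s). D eps B < 0"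
    and "\<forall>\<^sub>F eps in at_right (x * s). D eps B > 0"
proof -
  have "s > 0"
    using \<open>B > 0\<close> by (simp add: s_def)
  then have window: "m * s < x * s" "x * s < M * s"
    using assms by simp_all
  have "D eps B = 0 \<longleftrightarrow> eps = x * s" if "eps \<in> {m * s..M * s}" for eps
    using sgn_D that by (metis sgn_0_0 right_minus_eq)
  then have "{eps. m * s \<le> eps \<and> eps \<le> M * s \<and> D eps B = 0} = {x * s}"
    using window by auto
  then show "lower_crossing D q m M B = x * s" "D (x * s) B = 0"
    by (auto simp: lower_crossing_def s_def)
  show "\<forall>\<^sub>F eps in at_left (x * s). D eps B < 0"
    using eventually_at_left_real[OF window(1)]
  proof eventually_elim
    case (elim eps)
    with sgn_D window have "sgn (D eps B) = sgn (eps - x * s)"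
      by auto
    with elim show ?case
      by (simp add: sgn_if split: if_splits)
  qed
  show "\<forall>\<^sub>F eps in at_right (x * s). D eps B > 0"
    using eventually_at_right_real[OF window(2)]
  proof eventually_elim
    case (elim eps)
    with sgn_D window have "sgn (D eps B) = sgn (eps - x * s)"
      by auto
    with elim show ?case
      by (simp add: sgn_if split: if_splits)
  qed
qed

lemma eventually_sgn_crossing_power_profile:
  fixes S S' :: "real \<Rightarrow> real \<Rightarrow> real" and A K q m M \<eta> :: real
  defines "C \<equiv> (K / A) powr (1 / (2 - q))"
  assumes "q < 2" "A > 0" "K > 0" "0 < m" "m < C" "C < M" "\<eta> > 0"
    and S_deriv: "\<forall>B>0. \<forall>x>0. (S B has_real_derivative S' B x) (at x)"
    and S_lim: "\<forall>T. compact T \<and> T \<subseteq> {0<..} \<longrightarrow> uniform_limit T S (\<lambda>x. 0) at_top"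
    and S'_lim: "\<forall>T. compact T \<and> T \<subseteq> {0<..} \<longrightarrow> uniform_limit T S' (\<lambda>x. 0) at_top"
  shows "\<forall>\<^sub>F B in at_top. \<exists>x. \<bar>x - C\<bar> < \<eta> \<and>
           (\<forall>y\<in>{m..M}. sgn (A * y^2 - K * y powr q + S B y) = sgn (y - x))"
proof (rule eventually_sgn_crossing_near_simple_zero
    [where f = "\<lambda>y. A * y^2 - K * y powr q" and f' = "\<lambda>y. A * (2 * y) - K * (q * y powr (q - 1))"])
  show "m < C" "C < M" "\<eta> > 0"
    by fact+
  fix y
  assume "y \<in> {m..M}"
  then have "y > 0"
    using \<open>0 < m\<close> by simp
  then show "((\<lambda>y. A * y^2 - K * y powr q) has_real_derivative A * (2 * y) - K * (q * y powr (q - 1))) (at y)"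
    by (intro DERIV_diff DERIV_cmult has_real_derivative_powr) (auto intro!: derivative_eq_intros)
next
  show "isCont (\<lambda>y. A * (2 * y) - K * (q * y powr (q - 1))) C"
    using assms by (intro continuous_intros) (auto simp: C_def)
  show "A * (2 * C) - K * (q * C powr (q - 1)) > 0"
    using power_profile_deriv_pos_at_root[of q A K] assms by (simp add: C_def)
next
  fix y
  assume "y \<in> {m..<C}"
  then show "A * y^2 - K * y powr q < 0"
    using sgn_power_profile[of q A K y] assms by (simp add: C_def sgn_1_neg)
next
  fix y
  assume "y \<in> {C<..M}"
  then show "A * y^2 - K * y powr q > 0"
    using sgn_power_profile[of q A K y] assms by (simp add: C_def sgn_1_pos)
next
  have "{m..M} \<subseteq> {0<..}"
    using \<open>0 < m\<close> by auto
  then show "uniform_limit {m..M} S (\<lambda>_. 0) at_top" "uniform_limit {m..M} S' (\<lambda>_. 0) at_top"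
    using S_lim S'_lim by auto
  show "\<forall>\<^sub>F B in at_top. \<forall>y\<in>{m..M}. (S B has_real_derivative S' B y) (at y)"
    using eventually_gt_at_top[of "0::real"]
  proof eventually_elim
    case (elim B)
    with S_deriv \<open>0 < m\<close> show ?case
      by simp
  qed
qed

lemma lower_crossing_of_rescaled_sgn:
  fixes D :: "real \<Rightarrow> real \<Rightarrow> real" and R :: "real \<Rightarrow> real" and A K q B m M x :: real
  defines "s \<equiv> B powr (-1 / (2 - q))"
  assumes "q < 2" "B > 0" "0 < m" "m < x" "x < M"
    and D_eq: "\<And>eps. D eps B = A * eps^2 - K * eps powr q / B + R eps"
    and sgn_rescaled: "\<forall>y\<in>{m..M}.
      sgn (A * y^2 - K * y powr q + B powr (2 / (2 - q)) * R (y * s)) = sgn (y - x)"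
  shows "lower_crossing D q m M B = x * s"
    and "D (x * s) B = 0"
    and "\<forall>\<^sub>F eps in at_left (x * s). D eps B < 0"
    and "\<forall>\<^sub>F eps in at_right (x * s). D eps B > 0"
proof -
  have "s > 0"
    using \<open>B > 0\<close> by (simp add: s_def)
  have "sgn (D eps B) = sgn (eps - x * s)" if "eps \<in> {m * s..M * s}" for eps
  proof -
    define y where "y = eps / s"
    have y: "eps = y * s" "y \<in> {m..M}" "y > 0"
      using that \<open>s > 0\<close> mult_pos_pos[OF \<open>0 < m\<close> \<open>s > 0\<close>] by (auto simp: y_def field_simps)
    have "B powr (2 / (2 - q)) * D eps B
        = B powr (2 / (2 - q)) * (A * eps^2 - K * eps powr q / B) + B powr (2 / (2 - q)) * R eps"
      by (simp add: D_eq distrib_left)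
    also have "\<dots> = A * y^2 - K * y powr q + B powr (2 / (2 - q)) * R (y * s)"
      using power_law_rescaling[of q B y A K] assms y by (simp add: s_def)
    finally have "sgn (B powr (2 / (2 - q)) * D eps B) = sgn (y - x)"
      using sgn_rescaled y by simp
    then have "sgn (D eps B) = sgn (y - x)"
      using \<open>B > 0\<close> by (simp add: sgn_mult sgn_pos)
    also have "\<dots> = sgn (eps - x * s)"
      using \<open>s > 0\<close> by (simp add: y sgn_mult flip: left_diff_distrib)
    finally show ?thesis .
  qed
  then show "lower_crossing D q m M B = x * s" "D (x * s) B = 0"
    "\<forall>\<^sub>F eps in at_left (x * s). D eps B < 0" "\<forall>\<^sub>F eps in at_right (x * s). D eps B > 0"
    using lower_crossing_of_sgn[where D = D and q = q, OF \<open>B > 0\<close> \<open>m < x\<close> \<open>x < M\<close>]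
    by (simp_all add: s_def)
qed

lemma eventually_lower_crossing_near_root:
  fixes D R dS :: "real \<Rightarrow> real \<Rightarrow> real" and A K q m M :: real
  defines "C \<equiv> (K / A) powr (1 / (2 - q))"
  assumes "q < 2" "A > 0" "K > 0" "0 < m" "m < C" "C < M"
    and D_eq: "\<And>eps B. D eps B = A * eps^2 - K * eps powr q / B + R eps B"
    and R_deriv: "\<forall>B>0. \<forall>x>0. ((\<lambda>y. B powr (2 / (2 - q)) * R (y * B powr (-1 / (2 - q))) B)
                                 has_real_derivative dS B x) (at x)"
    and R_lim: "\<forall>T. compact T \<and> T \<subseteq> {0<..} \<longrightarrow>
      uniform_limit T (\<lambda>B x. B powr (2 / (2 - q)) * R (x * B powr (-1 / (2 - q))) B) (\<lambda>x. 0) at_top"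
    and dS_lim: "\<forall>T. compact T \<and> T \<subseteq> {0<..} \<longrightarrow> uniform_limit T dS (\<lambda>x. 0) at_top"
    and \<eta>: "0 < \<eta>" "\<eta> \<le> C - m" "\<eta> \<le> M - C"
  shows "\<forall>\<^sub>F B in at_top. \<exists>x. \<bar>x - C\<bar> < \<eta> \<and> lower_crossing D q m M B = x * B powr (-1 / (2 - q))
            \<and> (\<exists>eps. m * B powr (-1 / (2 - q)) \<le> eps \<and> eps \<le> M * B powr (-1 / (2 - q)) \<and> D eps B = 0)
            \<and> D (lower_crossing D q m M B) B = 0
            \<and> (\<forall>\<^sub>F eps in at_left (lower_crossing D q m M B). D eps B < 0)
            \<and> (\<forall>\<^sub>F eps in at_right (lower_crossing D q m M B). D eps B > 0)"
    (is "eventually ?near_root at_top")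
proof -
  define S where "S B y = B powr (2 / (2 - q)) * R (y * B powr (-1 / (2 - q))) B" for B y
  have "\<forall>\<^sub>F B in at_top. \<exists>x. \<bar>x - C\<bar> < \<eta> \<and>
      (\<forall>y\<in>{m..M}. sgn (A * y^2 - K * y powr q + S B y) = sgn (y - x))"
    unfolding C_def using assms
    by (intro eventually_sgn_crossing_power_profile[where S' = dS]) (simp_all add: S_def C_def)
  then show ?thesis
  proof (rule eventually_mono[OF eventually_conj[OF eventually_gt_at_top[of 0]]])
    fix B
    assume "B > 0 \<and> (\<exists>x. \<bar>x - C\<bar> < \<eta> \<and>
      (\<forall>y\<in>{m..M}. sgn (A * y^2 - K * y powr q + S B y) = sgn (y - x)))"
    then obtain x where "B > 0" "\<bar>x - C\<bar> < \<eta>"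
      and sgn_rescaled: "\<forall>y\<in>{m..M}. sgn (A * y^2 - K * y powr q + S B y) = sgn (y - x)"
      by blast
    define s where "s = B powr (-1 / (2 - q))"
    have "m < x" "x < M"
      using \<open>\<bar>x - C\<bar> < \<eta>\<close> \<eta> by auto
    moreover have "s > 0"
      using \<open>B > 0\<close> by (simp add: s_def)
    ultimately have "m * s \<le> x * s" "x * s \<le> M * s"
      by simp_all
    moreover note lower_crossing_of_rescaled_sgn[where D = D and R = "\<lambda>eps. R eps B",
        OF \<open>q < 2\<close> \<open>B > 0\<close> \<open>0 < m\<close> \<open>m < x\<close> \<open>x < M\<close> D_eq sgn_rescaled[unfolded S_def]]
    ultimately show "?near_root B"
      by (intro exI[of _ x]) (auto simp: s_def \<open>\<bar>x - C\<bar> < \<eta>\<close>)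
  qed
qed

lemma lower_crossing_asymptotics:
  fixes D R dS :: "real \<Rightarrow> real \<Rightarrow> real" and A K q m M :: real
  defines "C \<equiv> (K / A) powr (1 / (2 - q))"
  assumes "q < 2" "A > 0" "K > 0" "0 < m" "m < C" "C < M"
    and D_eq: "\<And>eps B. D eps B = A * eps^2 - K * eps powr q / B + R eps B"
    and R_deriv: "\<forall>B>0. \<forall>x>0. ((\<lambda>y. B powr (2 / (2 - q)) * R (y * B powr (-1 / (2 - q))) B)
                                 has_real_derivative dS B x) (at x)"
    and R_lim: "\<forall>T. compact T \<and> T \<subseteq> {0<..} \<longrightarrow>
      uniform_limit T (\<lambda>B x. B powr (2 / (2 - q)) * R (x * B powr (-1 / (2 - q))) B) (\<lambda>x. 0) at_top"
    and dS_lim: "\<forall>T. compact T \<and> T \<subseteq> {0<..} \<longrightarrow> uniform_limit T dS (\<lambda>x. 0) at_top"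
  shows "(\<forall>\<^sub>F B in at_top.
            (\<exists>eps. m * B powr (-1 / (2 - q)) \<le> eps \<and> eps \<le> M * B powr (-1 / (2 - q)) \<and> D eps B = 0)
            \<and> D (lower_crossing D q m M B) B = 0
            \<and> (\<forall>\<^sub>F eps in at_left (lower_crossing D q m M B). D eps B < 0)
            \<and> (\<forall>\<^sub>F eps in at_right (lower_crossing D q m M B). D eps B > 0))
       \<and> ((\<lambda>B. lower_crossing D q m M B / (C * B powr (-1 / (2 - q)))) \<longlongrightarrow> 1) at_top"
    (is "eventually ?window at_top \<and> ?ratio_limit")
proof -
  have "C > 0"
    using assms by (simp add: C_def)
  note near_root = eventually_lower_crossing_near_root[OF assms(2-)[unfolded C_def], folded C_def]
  show ?thesis
  proof
    show "eventually ?window at_top"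
      using near_root[of "min (C - m) (M - C)"] \<open>m < C\<close> \<open>C < M\<close> by (auto elim!: eventually_mono)
    show ?ratio_limit
    proof (rule tendstoI)
      fix e :: real
      assume "e > 0"
      define \<eta> where "\<eta> = min (min (C - m) (M - C)) (e * C)"
      have "0 < \<eta>" "\<eta> \<le> C - m" "\<eta> \<le> M - C" "\<eta> \<le> e * C"
        using \<open>e > 0\<close> \<open>C > 0\<close> \<open>m < C\<close> \<open>C < M\<close> by (auto simp: \<eta>_def)
      from near_root[OF this(1-3)] eventually_gt_at_top[of 0]
      show "\<forall>\<^sub>F B in at_top. dist (lower_crossing D q m M B / (C * B powr (-1 / (2 - q)))) 1 < e"
      proof eventually_elim
        case (elim B)
        then obtain x where "\<bar>x - C\<bar> < e * C" and "lower_crossing D q m M B = x * B powr (-1 / (2 - q))"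
          using \<open>\<eta> \<le> e * C\<close> by force
        with \<open>B > 0\<close> have ratio: "lower_crossing D q m M B / (C * B powr (-1 / (2 - q))) = x / C"
          by simp
        have "x / C - 1 = (x - C) / C"
          using \<open>C > 0\<close> by (simp add: field_simps)
        then have "dist (x / C) 1 = \<bar>x - C\<bar> / C"
          using \<open>C > 0\<close> by (simp add: dist_real_def)
        also have "\<dots> < e"
          using \<open>\<bar>x - C\<bar> < e * C\<close> \<open>C > 0\<close> by (simp add: divide_less_eq)
        finally show ?case
          by (simp only: ratio)
      qed
    qed
  qed
qed

theorem corollary8:
  fixes mu v :: "real \<Rightarrow> real" and mu0 :: real
    and k :: nat and lam cf pr a :: "nat \<Rightarrow> real"
    and alpha nu q delta_v delta_b :: real
    and dS :: "real \<Rightarrow> real \<Rightarrow> real"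
  assumes bounded_obs: "\<exists>b. \<forall>eps\<ge>0. \<bar>mu eps\<bar> \<le> b \<and> \<bar>mu0\<bar> \<le> b"
    and var_nonneg: "\<forall>eps\<ge>0. v eps \<ge> 0"
    and q_nonneg: "q \<ge> 0"
    and k_pos: "k \<ge> 1"
    and lam0: "lam 0 = 1"
    and lam_mono: "\<forall>i j. i < j \<and> j \<le> k \<longrightarrow> lam i < lam j"
    and cf_sum: "(\<Sum>j\<le>k. cf j) = 1"
    and cf_moments: "\<forall>m\<in>{1..k}. (\<Sum>j\<le>k. cf j * lam j ^ m) = 0"
    and pr_pos: "\<forall>j\<le>k. pr j > 0"
    and pr_sum: "(\<Sum>j\<le>k. pr j) = 1"
    \<comment> \<open>(A1(k))\<close>
    and A1: "\<exists>Ca e1. e1 > 0 \<and> (\<forall>j\<le>k. \<forall>eps. 0 < eps \<and> eps \<le> e1 \<longrightarrow>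
               \<bar>mu (lam j * eps) - mu0 - (\<Sum>m=1..k. a m * lam j ^ m * eps ^ m)\<bar> \<le> Ca * eps ^ (k+1))"
    and a1: "a 1 = alpha" and alpha_nz: "alpha \<noteq> 0"
    \<comment> \<open>(A4)\<close>
    and A4: "\<exists>Cv e2. e2 > 0 \<and> (\<forall>j\<le>k. \<forall>eps. 0 < eps \<and> eps \<le> e2 \<longrightarrow>
               \<bar>v (lam j * eps) - nu * (lam j * eps) powr q\<bar> \<le> Cv * (lam j * eps) powr (q + delta_v))"
    and nu_pos: "nu > 0" and dv_pos: "delta_v > 0"
    \<comment> \<open>(A5): size of the remainder\<close>
    and db_pos: "delta_b > 0"
    and A5: "\<exists>CR e0. e0 > 0 \<and> (\<forall>B>0. \<forall>eps. 0 < eps \<and> eps \<le> e0 \<longrightarrow>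
               \<bar>zne_R mu mu0 v k cf lam pr alpha nu q eps B\<bar>
                 \<le> CR * (eps powr (2 + delta_b) + eps powr (q + delta_v) / B))"
    \<comment> \<open>(A5), case q < 2: rescaled remainder differentiable, it and its x-derivative tend to 0
        uniformly on compact subsets of (0,inf)\<close>
    and A5_diff: "q < 2 \<Longrightarrow> \<forall>B>0. \<forall>x>0.
               ((\<lambda>y. B powr (2/(2-q)) * zne_R mu mu0 v k cf lam pr alpha nu q (y * B powr (-1/(2-q))) B)
                  has_real_derivative dS B x) (at x)"
    and A5_unif: "q < 2 \<Longrightarrow> \<forall>S. compact S \<and> S \<subseteq> {0<..} \<longrightarrow>
               uniform_limit S
                 (\<lambda>B x. B powr (2/(2-q)) * zne_R mu mu0 v k cf lam pr alpha nu q (x * B powr (-1/(2-q))) B)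
                 (\<lambda>x. 0) at_top"
    and A5_unif_deriv: "q < 2 \<Longrightarrow> \<forall>S. compact S \<and> S \<subseteq> {0<..} \<longrightarrow>
               uniform_limit S dS (\<lambda>x. 0) at_top"
  shows "K_qk nu q k cf lam pr > 0
    \<and> (q < 2 \<longrightarrow>
         (\<forall>m M. 0 < m \<and> m < (K_qk nu q k cf lam pr / alpha^2) powr (1/(2-q))
                 \<and> (K_qk nu q k cf lam pr / alpha^2) powr (1/(2-q)) < M \<longrightarrow>
            (\<forall>\<^sub>F B in at_top.
               (\<exists>eps. m * B powr (-1/(2-q)) \<le> eps \<and> eps \<le> M * B powr (-1/(2-q))
                      \<and> delta_mse mu mu0 v k cf lam pr eps B = 0)
             \<and> delta_mse mu mu0 v k cf lam pr
                 (lower_crossing (delta_mse mu mu0 v k cf lam pr) q m M B) B = 0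
             \<and> (\<forall>\<^sub>F eps in at_left (lower_crossing (delta_mse mu mu0 v k cf lam pr) q m M B).
                  delta_mse mu mu0 v k cf lam pr eps B < 0)
             \<and> (\<forall>\<^sub>F eps in at_right (lower_crossing (delta_mse mu mu0 v k cf lam pr) q m M B).
                  delta_mse mu mu0 v k cf lam pr eps B > 0))
          \<and> ((\<lambda>B. lower_crossing (delta_mse mu mu0 v k cf lam pr) q m M B
                   / ((K_qk nu q k cf lam pr / alpha^2) powr (1/(2-q)) * B powr (-1/(2-q))))
               \<longlongrightarrow> 1) at_top))
    \<and> (q = 2 \<longrightarrow> (\<forall>B>0.
          (B > K_qk nu q k cf lam pr / alpha^2 \<longrightarrow>
             (\<forall>\<^sub>F eps in at_right 0. delta_mse mu mu0 v k cf lam pr eps B > 0))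
        \<and> (B < K_qk nu q k cf lam pr / alpha^2 \<longrightarrow>
             (\<forall>\<^sub>F eps in at_right 0. delta_mse mu mu0 v k cf lam pr eps B < 0))))
    \<and> (q > 2 \<longrightarrow> (\<forall>\<^sub>F B in at_top.
          \<forall>\<^sub>F eps in at_right 0. delta_mse mu mu0 v k cf lam pr eps B > 0))"
proof -
  let ?D = "delta_mse mu mu0 v k cf lam pr"
  let ?R = "zne_R mu mu0 v k cf lam pr alpha nu q"
  let ?K = "K_qk nu q k cf lam pr"
  have K_pos: "?K > 0"
    using cf_moments k_pos by (intro K_qk_pos[OF nu_pos q_nonneg lam0 lam_mono cf_sum _ pr_pos pr_sum]) force
  have D_eq: "?D eps B = alpha^2 * eps^2 - ?K * eps powr q / B + ?R eps B" for eps B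
    by (simp add: zne_R_def)
  have "alpha^2 > 0"
    using alpha_nz by simp
  obtain CR e0 where "e0 > 0" and R_bound: "\<forall>B>0. \<forall>eps. 0 < eps \<and> eps \<le> e0 \<longrightarrow>
      \<bar>?R eps B\<bar> \<le> CR * (eps powr (2 + delta_b) + eps powr (q + delta_v) / B)"
    using A5 by blast
  show ?thesis
    (is "_ \<and> (_ \<longrightarrow> ?subquadratic) \<and> (_ \<longrightarrow> ?quadratic) \<and> (_ \<longrightarrow> ?superquadratic)")
  proof (intro conjI impI)
    assume "q < 2"
    with K_pos \<open>alpha^2 > 0\<close> D_eq A5_diff A5_unif A5_unif_deriv show ?subquadratic
      by (intro allI impI lower_crossing_asymptotics[where R = ?R and dS = dS]) auto
  next
    assume "q = 2"
    show ?quadratic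
    proof (intro allI impI)
      fix B :: real
      assume "B > 0"
      with \<open>q = 2\<close> have "B \<noteq> ?K / alpha^2 \<Longrightarrow>
          \<forall>\<^sub>F eps in at_right 0. sgn (?D eps B) = sgn (B - ?K / alpha^2)"
        using \<open>alpha^2 > 0\<close> db_pos dv_pos \<open>e0 > 0\<close> D_eq R_bound
        by (intro sgn_threshold_at_quadratic_variance[where R = "\<lambda>eps. ?R eps B" and C = CR
            and db = delta_b and dv = delta_v and r = e0]) auto
      then show "(B > ?K / alpha^2 \<longrightarrow> (\<forall>\<^sub>F eps in at_right 0. ?D eps B > 0))
          \<and> (B < ?K / alpha^2 \<longrightarrow> (\<forall>\<^sub>F eps in at_right 0. ?D eps B < 0))"
        by (auto elim!: eventually_mono simp: sgn_1_pos sgn_1_neg)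
    qed
  next
    assume "q > 2"
    show ?superquadratic
      using eventually_gt_at_top[of 0]
    proof eventually_elim
      case (elim B)
      with \<open>q > 2\<close> \<open>alpha^2 > 0\<close> db_pos dv_pos \<open>e0 > 0\<close> D_eq R_bound show ?case
        by (intro eventually_pos_at_superquadratic_variance[where R = "\<lambda>eps. ?R eps B" and C = CR
            and db = delta_b and dv = delta_v and r = e0]) auto
    qed
  qed (rule K_pos)
qed

end
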